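(* For every $n \in \mathbb N$ and $q \in \{0,1,\dots,\lfloor n/2\rfloor\}$, $$\sum_{\mathbf m \in S_{n,q,1}} \pi_{\mathbf m} = \frac{1}{(n-2q)!\, q!\, 2^q}.$$
   Context: $S_{n,q,1} = \{\mathbf m=(m_1,\dots,m_{n-q}) \in \{0,1\}^{n-q} : m_1+\cdots+m_{n-q} = q\}$, and for such $\mathbf m$, $\pi_{\mathbf m} = \prod_{i=1}^{n-q} [m_i+m_{i+1}+\cdots+m_{n-q} + (n-q-i+1)]^{-1}$. *)

theory Defs
  imports "HOL-Analysis.Analysis"
begin

text \<open>Vectors m = (m_1,...,m_{n-q}) in {0,1}^{n-q} are represented as functions
  nat => nat supported on {1..n-q} (value 0 outside), so that the set is finite.\<close>

definition S1 :: "nat \<Rightarrow> nat \<Rightarrow> (nat \<Rightarrow> nat) set" where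
  "S1 n q = {m. (\<forall>i\<in>{1..n-q}. m i \<in> {0,1}) \<and> (\<forall>i. i \<notin> {1..n-q} \<longrightarrow> m i = 0)
               \<and> (\<Sum>i=1..n-q. m i) = q}"

definition pim :: "nat \<Rightarrow> nat \<Rightarrow> (nat \<Rightarrow> nat) \<Rightarrow> real" where
  "pim n q m = (\<Prod>i=1..n-q. 1 / (real (\<Sum>j=i..n-q. m j) + real (n - q - i + 1)))"

end

theory Submission
  imports Defs
begin

text \<open>Reading a 0/1-vector m as the list [m_1, ..., m_N], the weight pi_m is a product over the
  suffixes of the list, each suffix contributing 1/(its sum + its length). The first factor is
  1/(N+k) whatever m_1 is, so the total weight F(N,k) of the lists of length N with k ones satisfies
  F(N+1,k) = (F(N,k) + F(N,k-1)) / (N+1+k); the closed form 1/((N-k)! k! 2^k) obeys the same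
  recursion and initial values.\<close>

fun suffix_weight :: "nat list \<Rightarrow> real" where
  "suffix_weight [] = 1"
| "suffix_weight (x # xs) = suffix_weight xs / (real (sum_list (x # xs)) + real (length (x # xs)))"

definition bit_lists :: "nat \<Rightarrow> nat \<Rightarrow> nat list set" where
  "bit_lists N k = {xs. length xs = N \<and> set xs \<subseteq> {0, 1} \<and> sum_list xs = k}"

lemma finite_bit_lists: "finite (bit_lists N k)"
proof (rule finite_subset)
  show "bit_lists N k \<subseteq> {xs. set xs \<subseteq> {0, 1} \<and> length xs = N}"
    by (auto simp: bit_lists_def)
qed (rule finite_lists_length_eq, simp)

lemma bit_lists_0: "bit_lists 0 k = (if k = 0 then {[]} else {})"
  by (auto simp: bit_lists_def)

lemma bit_lists_Suc_0: "bit_lists (Suc N) 0 = Cons 0 ` bit_lists N 0"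
  by (auto simp: bit_lists_def length_Suc_conv)

lemma bit_lists_Suc_Suc:
  "bit_lists (Suc N) (Suc k) = Cons 0 ` bit_lists N (Suc k) \<union> Cons 1 ` bit_lists N k"
proof -
  have "xs \<in> Cons 0 ` bit_lists N (Suc k) \<union> Cons 1 ` bit_lists N k"
    if "xs \<in> bit_lists (Suc N) (Suc k)" for xs
    using that by (cases xs) (auto simp: bit_lists_def)
  then show ?thesis by (auto simp: bit_lists_def)
qed

lemma sum_suffix_weight_Cons:
  "(\<Sum>xs\<in>Cons c ` bit_lists N k. suffix_weight xs)
     = (\<Sum>xs\<in>bit_lists N k. suffix_weight xs) / (real (c + k) + real (Suc N))"
proof -
  have "(\<Sum>xs\<in>Cons c ` bit_lists N k. suffix_weight xs)
      = (\<Sum>xs\<in>bit_lists N k. suffix_weight xs / (real (c + k) + real (Suc N)))"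
    by (subst sum.reindex) (auto simp: inj_on_def bit_lists_def intro: sum.cong)
  then show ?thesis by (simp add: sum_divide_distrib)
qed

definition closed_form :: "nat \<Rightarrow> nat \<Rightarrow> real" where
  "closed_form N k = (if k \<le> N then 1 / (fact (N - k) * fact k * 2 ^ k) else 0)"

lemma closed_form_Suc_0: "closed_form (Suc N) 0 = closed_form N 0 / real (Suc N)"
  by (simp add: closed_form_def fact_Suc)

lemma closed_form_Suc_Suc:
  "closed_form (Suc N) (Suc k)
     = (closed_form N (Suc k) + closed_form N k) / (real (Suc k) + real (Suc N))"
proof (cases "k < N")
  case True
  then obtain d where N: "N = Suc k + d" using less_imp_Suc_add by blast
  define A :: real where "A = fact d * fact k * 2 ^ k"
  define a :: real where "a = 2 * (real k + 1)"
  define b :: real where "b = real d + 1"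
  have pos: "A > 0" "a > 0" "b > 0" by (simp_all add: A_def a_def b_def)
  have "closed_form N (Suc k) + closed_form N k = 1 / (A * a) + 1 / (A * b)"
    by (simp add: closed_form_def N Suc_diff_le A_def a_def b_def fact_Suc algebra_simps)
  also have "\<dots> = (a + b) / (A * a * b)"
    using pos by (simp add: field_simps)
  finally have "closed_form N (Suc k) + closed_form N k = (a + b) / (A * a * b)" .
  moreover have "real (Suc k) + real (Suc N) = a + b"
    by (simp add: a_def b_def N)
  moreover have "closed_form (Suc N) (Suc k) = 1 / (A * a * b)"
    by (simp add: closed_form_def N A_def a_def b_def fact_Suc algebra_simps)
  ultimately show ?thesis
    using pos by simp
next
  case False
  then consider "k = N" | "N < k" by linarith
  then show ?thesis
  proof cases
    case 1
    have "real (Suc N) + real (Suc N) = 2 * (real N + 1)" by simp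
    then show ?thesis
      by (simp add: 1 closed_form_def fact_Suc)
  qed (simp add: closed_form_def)
qed

lemma sum_suffix_weight_bit_lists: "(\<Sum>xs\<in>bit_lists N k. suffix_weight xs) = closed_form N k"
proof (induction N arbitrary: k)
  case 0
  then show ?case by (simp add: bit_lists_0 closed_form_def)
next
  case (Suc N)
  show ?case
  proof (cases k)
    case 0
    then show ?thesis
      by (simp add: bit_lists_Suc_0 sum_suffix_weight_Cons Suc.IH closed_form_Suc_0 add.commute)
  next
    case (Suc k')
    have "Cons 0 ` bit_lists N (Suc k') \<inter> Cons 1 ` bit_lists N k' = {}" by auto
    then show ?thesis
      by (simp add: Suc bit_lists_Suc_Suc sum.union_disjoint finite_bit_lists
          sum_suffix_weight_Cons Suc.IH closed_form_Suc_Suc add_divide_distrib)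
  qed
qed

lemma suffix_weight_map_upt:
  "suffix_weight (map m [a..<b]) = (\<Prod>i=a..<b. 1 / (real (\<Sum>j=i..<b. m j) + real (b - i)))"
proof (induction "b - a" arbitrary: a)
  case 0
  then show ?case by simp
next
  case (Suc d)
  then have "a < b" by simp
  then have map_upt: "map m [a..<b] = m a # map m [Suc a..<b]"
    by (simp add: upt_conv_Cons del: upt_Suc)
  have "suffix_weight (map m [a..<b]) = suffix_weight (map m [Suc a..<b])
      / (real (sum_list (map m [a..<b])) + real (length (map m [a..<b])))"
    unfolding map_upt by (rule suffix_weight.simps(2))
  also have "sum_list (map m [a..<b]) = (\<Sum>j=a..<b. m j)"
    by (simp add: interv_sum_list_conv_sum_set_nat)
  finally have "suffix_weight (map m [a..<b])
      = suffix_weight (map m [Suc a..<b]) / (real (\<Sum>j=a..<b. m j) + real (b - a))"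
    by simp
  with Suc \<open>a < b\<close> show ?case
    by (simp add: prod.atLeast_Suc_lessThan del: of_nat_sum)
qed

definition seq_of_list :: "nat list \<Rightarrow> nat \<Rightarrow> nat" where
  "seq_of_list xs i = (if i \<in> {1..length xs} then xs ! (i - 1) else 0)"

lemma map_seq_of_list: "map (seq_of_list xs) [1..<Suc (length xs)] = xs"
  by (rule nth_equalityI) (auto simp: seq_of_list_def simp del: upt_Suc)

lemma inj_on_seq_of_list: "inj_on seq_of_list {xs. length xs = N}"
proof (rule inj_onI)
  fix xs ys :: "nat list"
  assume "xs \<in> {xs. length xs = N}" "ys \<in> {xs. length xs = N}" "seq_of_list xs = seq_of_list ys"
  then show "xs = ys"
    using map_seq_of_list[of xs] map_seq_of_list[of ys] by (simp del: upt_Suc)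
qed

lemma sum_seq_of_list: "(\<Sum>i=1..length xs. seq_of_list xs i) = sum_list xs"
proof -
  have "(\<Sum>i=1..length xs. seq_of_list xs i)
      = sum_list (map (seq_of_list xs) [1..<Suc (length xs)])"
    by (simp add: interv_sum_list_conv_sum_set_nat atLeastLessThanSuc_atLeastAtMost del: upt_Suc)
  then show ?thesis by (simp only: map_seq_of_list)
qed

lemma pim_seq_of_list:
  assumes "length xs = n - q"
  shows "pim n q (seq_of_list xs) = suffix_weight xs"
proof -
  have "suffix_weight xs = suffix_weight (map (seq_of_list xs) [1..<Suc (n - q)])"
    using assms map_seq_of_list[of xs] by simp
  also have "\<dots> = pim n q (seq_of_list xs)"
    unfolding suffix_weight_map_upt pim_def
    by (rule prod.cong) (auto simp: atLeastLessThanSuc_atLeastAtMost Suc_diff_le)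
  finally show ?thesis by simp
qed

lemma seq_of_list_in_S1:
  assumes "xs \<in> bit_lists (n - q) q"
  shows "seq_of_list xs \<in> S1 n q"
proof -
  have len: "length xs = n - q" and bits: "set xs \<subseteq> {0, 1}" and "sum_list xs = q"
    using assms by (simp_all add: bit_lists_def)
  have "seq_of_list xs i \<in> {0, 1}" if "i \<in> {1..n - q}" for i
  proof -
    have "xs ! (i - 1) \<in> set xs" using that len by (intro nth_mem) auto
    then show ?thesis using that len bits by (auto simp: seq_of_list_def)
  qed
  moreover have "(\<Sum>i=1..n - q. seq_of_list xs i) = q"
    using sum_seq_of_list[of xs] len \<open>sum_list xs = q\<close> by simp
  ultimately show ?thesis
    using len by (simp add: S1_def seq_of_list_def)
qed

lemma S1_eq_image_seq_of_list: "S1 n q = seq_of_list ` bit_lists (n - q) q"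
proof
  show "S1 n q \<subseteq> seq_of_list ` bit_lists (n - q) q"
  proof
    fix m assume m: "m \<in> S1 n q"
    define xs where "xs = map m [1..<Suc (n - q)]"
    have "seq_of_list xs i = m i" for i
      using m by (auto simp: S1_def xs_def seq_of_list_def nth_upt simp del: upt_Suc)
    then have "seq_of_list xs = m" ..
    have "set xs = m ` {1..n - q}"
      by (simp add: xs_def atLeastLessThanSuc_atLeastAtMost del: upt_Suc)
    then have "set xs \<subseteq> {0, 1}"
      using m by (auto simp: S1_def)
    moreover have "sum_list xs = q"
      using m by (simp add: S1_def xs_def interv_sum_list_conv_sum_set_nat
          atLeastLessThanSuc_atLeastAtMost del: upt_Suc)
    ultimately have "xs \<in> bit_lists (n - q) q"
      by (simp add: bit_lists_def xs_def del: upt_Suc)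
    with \<open>seq_of_list xs = m\<close> show "m \<in> seq_of_list ` bit_lists (n - q) q" by blast
  qed
qed (auto intro: seq_of_list_in_S1)

theorem lemma3:
  fixes n q :: nat
  assumes "q \<le> n div 2"
  shows "(\<Sum>m\<in>S1 n q. pim n q m) = 1 / (fact (n - 2*q) * fact q * 2 ^ q)"
proof -
  have "inj_on seq_of_list (bit_lists (n - q) q)"
    by (rule inj_on_subset[OF inj_on_seq_of_list[of "n - q"]]) (auto simp: bit_lists_def)
  then have "(\<Sum>m\<in>S1 n q. pim n q m) = (\<Sum>xs\<in>bit_lists (n - q) q. suffix_weight xs)"
    by (rule sum.reindex_cong[OF _ S1_eq_image_seq_of_list])
      (simp add: bit_lists_def pim_seq_of_list)
  also have "\<dots> = closed_form (n - q) q"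
    by (rule sum_suffix_weight_bit_lists)
  also have "\<dots> = 1 / (fact (n - 2*q) * fact q * 2 ^ q)"
  proof -
    have "q \<le> n - q" and "n - q - q = n - 2*q"
      using assms by linarith+
    then show ?thesis by (simp add: closed_form_def)
  qed
  finally show ?thesis .
qed

end
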